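(* Let $k\ge1$, $G=(V,E)$ an inductively $k$-independent graph with $k$-independence ordering $v_1,\dots,v_n$, $f:2^V\to\mathbb{R}_{\ge0}$ submodular with $f(\emptyset)=0$, $\beta>0$ and $p\in(0,1)$. Let $S_{\mathrm{out}}$ be the output of algorithm PD-RAND (described in the context) and $\mathrm{OPT}=\max\{f(T):T\text{ independent in }G\}$. Then \[ \mathrm{OPT}\le\frac{k\max\{\frac{1-p}{p},1+\beta\}+\frac{1+\beta}{\beta}}{1-p}\;\mathbb{E}[f(S_{\mathrm{out}})]. \]
   Context: $N(v)$ is the neighbourhood of $v$ (excluding $v$); $G$ is inductively $k$-independent with $k$-independence ordering $v_1,\dots,v_n$ if for every $i$, $G[N(v_i)\cap\{v_i,\dots,v_n\}]$ has no independent set of size more than $k$. For $S\subseteq V$, $f_S(v)=f(S\cup\{v\})-f(S)$. Algorithm PD-RAND (parameters $\beta>0$, $p\in(0,1)$). Phase 1: start with $S=\emptyset$ (a stack) and $w_1=\dots=w_n=0$. For $i=1,\dots,n$: let $C_i=N(v_i)\cap S$ for the current $S$; if $f_S(v_i)>(1+\beta)\sum_{v_j\in C_i}w_j$, then with probability $p$ (independently of all else) set $w_i=f_S(v_i)-\sum_{v_j\in C_i}w_j$ (with $S$ the set before insertion) and push $v_i$ onto $S$; in all other cases leave $w_i=0$ and do not add $v_i$. Let $S_{\mathrm{end}}$ be $S$ at the end of Phase 1. Phase 2: with $S_{\mathrm{out}}=\emptyset$, pop vertices of $S_{\mathrm{end}}$ in reverse insertion order, adding a popped $v$ to $S_{\mathrm{out}}$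 whenever $S_{\mathrm{out}}\cup\{v\}$ is independent. Output $S_{\mathrm{out}}$. *)

theory Defs
  imports "HOL-Probability.Probability"
begin

definition simple_graph :: "'a list \<Rightarrow> ('a \<Rightarrow> 'a \<Rightarrow> bool) \<Rightarrow> bool" where
  "simple_graph vs E \<longleftrightarrow> distinct vs \<and> (\<forall>x y. E x y \<longrightarrow> E y x)
     \<and> (\<forall>x. \<not> E x x) \<and> (\<forall>x y. E x y \<longrightarrow> x \<in> set vs \<and> y \<in> set vs)"

definition independent :: "('a \<Rightarrow> 'a \<Rightarrow> bool) \<Rightarrow> 'a set \<Rightarrow> bool" where
  "independent E T \<longleftrightarrow> (\<forall>x\<in>T. \<forall>y\<in>T. \<not> E x y)"

definition k_independence_ordering :: "nat \<Rightarrow> 'a list \<Rightarrow> ('a \<Rightarrow> 'a \<Rightarrow> bool) \<Rightarrow> bool" where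
  "k_independence_ordering k vs E \<longleftrightarrow>
     (\<forall>i < length vs. \<forall>I. I \<subseteq> {u. E (vs ! i) u} \<inter> set (drop i vs) \<and> independent E I
        \<longrightarrow> card I \<le> k)"

definition submodular_on :: "'a set \<Rightarrow> ('a set \<Rightarrow> real) \<Rightarrow> bool" where
  "submodular_on V f \<longleftrightarrow>
     (\<forall>A B. A \<subseteq> V \<longrightarrow> B \<subseteq> V \<longrightarrow> f (A \<union> B) + f (A \<inter> B) \<le> f A + f B)"

text \<open>Phase 1 state: the stack S (as a list, most recently pushed element first) and weights w.\<close>
definition pd_step :: "('a \<Rightarrow> 'a \<Rightarrow> bool) \<Rightarrow> ('a set \<Rightarrow> real) \<Rightarrow> real \<Rightarrow> real
    \<Rightarrow> 'a list \<times> ('a \<Rightarrow> real) \<Rightarrow> 'a \<Rightarrow> ('a list \<times> ('a \<Rightarrow> real)) pmf" where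
  "pd_step E f \<beta> p st v =
     (let S = fst st; w = snd st;
          C = {u \<in> set S. E v u};
          g = f (set S \<union> {v}) - f (set S);
          sC = (\<Sum>u\<in>C. w u)
      in if g > (1 + \<beta>) * sC
         then map_pmf (\<lambda>b. if b then (v # S, w(v := g - sC)) else (S, w)) (bernoulli_pmf p)
         else return_pmf (S, w))"

definition pd_phase1 :: "'a list \<Rightarrow> ('a \<Rightarrow> 'a \<Rightarrow> bool) \<Rightarrow> ('a set \<Rightarrow> real) \<Rightarrow> real \<Rightarrow> real
    \<Rightarrow> ('a list \<times> ('a \<Rightarrow> real)) pmf" where
  "pd_phase1 vs E f \<beta> p =
     foldl (\<lambda>M v. bind_pmf M (\<lambda>st. pd_step E f \<beta> p st v)) (return_pmf ([], (\<lambda>_. 0))) vs"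

text \<open>Phase 2: pop the stack (head first = reverse insertion order), greedily keep independence.\<close>
definition pd_phase2 :: "('a \<Rightarrow> 'a \<Rightarrow> bool) \<Rightarrow> 'a list \<Rightarrow> 'a set" where
  "pd_phase2 E S = foldl (\<lambda>Out v. if independent E (Out \<union> {v}) then Out \<union> {v} else Out) {} S"

definition pd_rand :: "'a list \<Rightarrow> ('a \<Rightarrow> 'a \<Rightarrow> bool) \<Rightarrow> ('a set \<Rightarrow> real) \<Rightarrow> real \<Rightarrow> real \<Rightarrow> 'a set pmf" where
  "pd_rand vs E f \<beta> p = map_pmf (\<lambda>st. pd_phase2 E (fst st)) (pd_phase1 vs E f \<beta> p)"

definition OPT :: "'a list \<Rightarrow> ('a \<Rightarrow> 'a \<Rightarrow> bool) \<Rightarrow> ('a set \<Rightarrow> real) \<Rightarrow> real" where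
  "OPT vs E f = Max {f T | T. T \<subseteq> set vs \<and> independent E T}"

end

theory Submission
  imports Defs
begin

text \<open>Phase 1 keeps its weights tight: the weight of a pushed vertex plus the weights of its
  earlier neighbours on the stack equals its marginal gain. By submodularity the total weight
  is then at most the value of the greedy Phase 2 output, since every discarded vertex can be
  charged to a kept neighbour pushed after it. For an optimal independent set \<open>T\<close>, a potential
  comparing \<open>f (S \<union> T) - f S\<close> with the weights of the stack vertices, counted \<open>1 + \<beta>\<close> times
  for each later neighbour in \<open>T\<close> and \<open>(1 - p) / p\<close> times for the stack vertices in \<open>T\<close>, does
  not increase in expectation. With \<open>k\<close>-independence and \<open>f S \<le> (1 + \<beta>) / \<beta> * weight\<close> this bounds
  \<open>E f (S \<union> T)\<close> by the stated factor times \<open>E f S\<^sub>o\<^sub>u\<^sub>t\<close>. Finally every vertex is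
  on the stack with probability at most \<open>p\<close>, so \<open>E f (S \<union> T) \<ge> (1 - p) f T\<close>.\<close>

section \<open>Submodular functions\<close>

definition marginal :: "('a set \<Rightarrow> real) \<Rightarrow> 'a set \<Rightarrow> 'a \<Rightarrow> real" where
  "marginal f A v = f (insert v A) - f A"

lemma submodular_onD:
  "submodular_on V f \<Longrightarrow> A \<subseteq> V \<Longrightarrow> B \<subseteq> V \<Longrightarrow> f (A \<union> B) + f (A \<inter> B) \<le> f A + f B"
  by (simp add: submodular_on_def)

lemma submodular_on_diminishing_returns:
  assumes "submodular_on V f" "A \<subseteq> B" "B \<subseteq> V" "x \<in> V" "x \<notin> B"
  shows "marginal f B x \<le> marginal f A x"
proof -
  have "insert x A \<subseteq> V" using assms(2-4) by auto
  then have "f (insert x A \<union> B) + f (insert x A \<inter> B) \<le> f (insert x A) + f B"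
    using submodular_onD[OF assms(1) _ assms(3)] by blast
  moreover have "insert x A \<union> B = insert x B" "insert x A \<inter> B = A"
    using assms(2,5) by auto
  ultimately show ?thesis unfolding marginal_def by simp
qed

lemma submodular_on_union_left:
  assumes "submodular_on V f" "T \<subseteq> V"
  shows "submodular_on V (\<lambda>A. f (T \<union> A))"
  unfolding submodular_on_def
proof (intro allI impI)
  fix A B assume "A \<subseteq> V" "B \<subseteq> V"
  then have "f ((T \<union> A) \<union> (T \<union> B)) + f ((T \<union> A) \<inter> (T \<union> B)) \<le> f (T \<union> A) + f (T \<union> B)"
    using assms by (intro submodular_onD[of V]) auto
  moreover have "(T \<union> A) \<union> (T \<union> B) = T \<union> (A \<union> B)" "(T \<union> A) \<inter> (T \<union> B) = T \<union> (A \<inter> B)"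
    by auto
  ultimately show "f (T \<union> (A \<union> B)) + f (T \<union> (A \<inter> B)) \<le> f (T \<union> A) + f (T \<union> B)"
    by simp
qed

lemma submodular_on_ge_sum_marginals:
  assumes "submodular_on V h" "distinct L" "set L \<subseteq> V" "A \<subseteq> set L"
  shows "h {} + (\<Sum>i<length L. of_bool (L ! i \<in> A) * marginal h (set (take i L)) (L ! i)) \<le> h A"
  using assms(2-4)
proof (induction L arbitrary: A rule: rev_induct)
  case Nil
  then show ?case by simp
next
  case (snoc x L)
  have x: "x \<notin> set L" "x \<in> V" and A': "A - {x} \<subseteq> set L"
    using snoc.prems by auto
  have "of_bool ((L @ [x]) ! i \<in> A) * marginal h (set (take i (L @ [x]))) ((L @ [x]) ! i)
      = of_bool (L ! i \<in> A - {x}) * marginal h (set (take i L)) (L ! i)" if "i < length L" for i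
    using that x(1) nth_mem[OF that] by (auto simp: nth_append)
  then have "(\<Sum>i<length (L @ [x]).
          of_bool ((L @ [x]) ! i \<in> A) * marginal h (set (take i (L @ [x]))) ((L @ [x]) ! i))
      = (\<Sum>i<length L. of_bool (L ! i \<in> A - {x}) * marginal h (set (take i L)) (L ! i))
        + of_bool (x \<in> A) * marginal h (set L) x"
    by simp
  also have "h {} + \<dots> \<le> h (A - {x}) + of_bool (x \<in> A) * marginal h (set L) x"
    using snoc.IH[of "A - {x}"] A' snoc.prems by simp
  also have "\<dots> \<le> h A"
  proof (cases "x \<in> A")
    case True
    have "marginal h (set L) x \<le> marginal h (A - {x}) x"
      using submodular_on_diminishing_returns[OF assms(1) A'] snoc.prems x by auto
    then show ?thesis using True by (simp add: marginal_def insert_absorb)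
  qed simp
  finally show ?case by simp
qed

lemma sum_antitone_weighted_increments_ge:
  fixes q H :: "nat \<Rightarrow> real"
  assumes antitone: "\<And>i. Suc i < n \<Longrightarrow> q (Suc i) \<le> q i"
    and nonneg: "\<And>i. 0 \<le> q i" "\<And>i. 0 \<le> H i"
  shows "- q 0 * H 0 \<le> (\<Sum>i<n. q i * (H (Suc i) - H i))"
proof -
  have partial: "q m * H (Suc m) - q 0 * H 0 \<le> (\<Sum>i<Suc m. q i * (H (Suc i) - H i))"
    if "m < n" for m
    using that
  proof (induction m)
    case (Suc m)
    have "q (Suc m) * H (Suc m) \<le> q m * H (Suc m)"
      using Suc.prems antitone[of m] nonneg(2) by (simp add: mult_right_mono)
    with Suc show ?case by (simp add: algebra_simps)
  qed (simp add: algebra_simps)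
  show ?thesis
  proof (cases n)
    case 0
    then show ?thesis using mult_nonneg_nonneg[OF nonneg(1,2)[of 0]] by simp
  next
    case (Suc m)
    then have "q m * H n - q 0 * H 0 \<le> (\<Sum>i<n. q i * (H (Suc i) - H i))"
      using partial[of m] by simp
    then show ?thesis using mult_nonneg_nonneg[OF nonneg(1)[of m] nonneg(2)[of n]] by linarith
  qed
qed

lemma expectation_of_bool_mem:
  "measure_pmf.expectation N (\<lambda>A. of_bool (u \<in> A)) = measure_pmf.prob N {A. u \<in> A}"
proof -
  have "(\<lambda>A. of_bool (u \<in> A) :: real) = indicator {A. u \<in> A}"
    by (simp add: fun_eq_iff indicator_def)
  then show ?thesis by simp
qed

lemma submodular_expectation_ge_sum_marginals:
  fixes N :: "'a set pmf" and h :: "'a set \<Rightarrow> real"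
  assumes "submodular_on V h" "distinct L" "set L = V"
    and support: "\<And>A. A \<in> set_pmf N \<Longrightarrow> A \<subseteq> V"
  shows "h {} + (\<Sum>i<length L. measure_pmf.prob N {A. L ! i \<in> A} * marginal h (set (take i L)) (L ! i))
    \<le> measure_pmf.expectation N h"
proof -
  define d where "d i = marginal h (set (take i L)) (L ! i)" for i
  have "finite (set_pmf N)"
    using finite_subset[of "set_pmf N" "Pow V"] assms(3) support by auto
  then have int: "integrable N g" for g :: "'a set \<Rightarrow> real"
    by (rule integrable_measure_pmf_finite)
  have "measure_pmf.expectation N (\<lambda>A. \<Sum>i<length L. of_bool (L ! i \<in> A) * d i)
      = (\<Sum>i<length L. measure_pmf.prob N {A. L ! i \<in> A} * d i)"
    by (simp only: Bochner_Integration.integral_sum[OF int] integral_mult_left_zero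
        expectation_of_bool_mem)
  then have "h {} + (\<Sum>i<length L. measure_pmf.prob N {A. L ! i \<in> A} * d i)
      = measure_pmf.expectation N (\<lambda>A. h {} + (\<Sum>i<length L. of_bool (L ! i \<in> A) * d i))"
    using int by simp
  also have "\<dots> \<le> measure_pmf.expectation N h"
    using submodular_on_ge_sum_marginals[OF assms(1,2)] assms(3) support
    by (intro integral_mono_AE int) (auto simp: AE_measure_pmf_iff d_def)
  finally show ?thesis unfolding d_def .
qed

text \<open>The sampling lemma of Feige, Mirrokni and Vondrak, as stated by Buchbinder, Feldman, Naor
  and Schwartz. Ordering the ground set by decreasing membership probability, the telescoping
  lower bound above becomes a sum by parts in which only the term \<open>- p * h {}\<close> can be
  negative.\<close>

lemma submodular_sampling_ge:
  fixes N :: "'a set pmf" and h :: "'a set \<Rightarrow> real"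
  assumes "finite V" "submodular_on V h" "\<And>A. A \<subseteq> V \<Longrightarrow> 0 \<le> h A"
    and support: "\<And>A. A \<in> set_pmf N \<Longrightarrow> A \<subseteq> V"
    and marg: "\<And>u. u \<in> V \<Longrightarrow> measure_pmf.prob N {A. u \<in> A} \<le> p" and "0 \<le> p"
  shows "(1 - p) * h {} \<le> measure_pmf.expectation N h"
proof -
  define q where "q u = measure_pmf.prob N {A. u \<in> A}" for u
  obtain L where L: "distinct L" "set L = V" "sorted (map (\<lambda>u. - q u) L)"
  proof -
    obtain xs where "set xs = V" "distinct xs"
      using finite_distinct_list[OF assms(1)] by blast
    then show ?thesis
      using that[of "sort_key (\<lambda>u. - q u) xs"] by simp
  qed
  define d where "d i = marginal h (set (take i L)) (L ! i)" for i
  have "- p * h {} \<le> (\<Sum>i<length L. q (L ! i) * d i)"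
  proof (cases L)
    case Nil
    then show ?thesis using assms(3,6) by simp
  next
    case (Cons u L')
    have "q u \<le> p" using marg L(2) Cons unfolding q_def by auto
    then have "- p * h {} \<le> - q (L ! 0) * h (set (take 0 L))"
      using Cons mult_right_mono[OF _ assms(3)[of "{}"]] by simp
    also have "\<dots> \<le> (\<Sum>i<length L. q (L ! i) * (h (set (take (Suc i) L)) - h (set (take i L))))"
    proof (rule sum_antitone_weighted_increments_ge)
      fix i assume "Suc i < length L"
      then show "q (L ! Suc i) \<le> q (L ! i)"
        using sorted_nth_mono[OF L(3), of i "Suc i"] by simp
    next
      fix i show "0 \<le> q (L ! i)" unfolding q_def by (rule measure_nonneg)
    next
      fix i show "0 \<le> h (set (take i L))" using assms(3) L(2) set_take_subset by metis
    qed
    also have "\<dots> = (\<Sum>i<length L. q (L ! i) * d i)"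
      by (intro sum.cong refl) (simp add: d_def marginal_def take_Suc_conv_app_nth)
    finally show ?thesis .
  qed
  moreover have "h {} + (\<Sum>i<length L. q (L ! i) * d i) \<le> measure_pmf.expectation N h"
    unfolding q_def d_def by (rule submodular_expectation_ge_sum_marginals[OF assms(2) L(1,2) support])
  ultimately show ?thesis by (simp add: algebra_simps)
qed

section \<open>Phase 2\<close>

text \<open>\<open>after xs u\<close> is the set of entries following the first occurrence of \<open>u\<close>. On the
  Phase 1 stack, stored most recent first, these are the vertices pushed before \<open>u\<close>.\<close>

fun after :: "'a list \<Rightarrow> 'a \<Rightarrow> 'a set" where
  "after [] u = {}"
| "after (x # xs) u = (if x = u then set xs else after xs u)"

lemma after_subset: "after xs u \<subseteq> set xs"
  by (induction xs) auto

lemma after_snoc: "u \<in> set xs \<Longrightarrow> after (xs @ [v]) u = insert v (after xs u)"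
  by (induction xs) auto

lemma after_snoc_last: "v \<notin> set xs \<Longrightarrow> after (xs @ [v]) v = {}"
  by (induction xs) auto

lemma after_nth:
  assumes "distinct xs" "i < length xs"
  shows "after xs (xs ! i) = set (drop (Suc i) xs)"
  using assms
proof (induction xs arbitrary: i)
  case (Cons x xs)
  show ?case
  proof (cases i)
    case (Suc j)
    then have "x \<noteq> xs ! j" using Cons.prems nth_mem[of j xs] by auto
    then show ?thesis using Cons Suc by auto
  qed simp
qed simp

definition greedy_insert :: "('a \<Rightarrow> 'a \<Rightarrow> bool) \<Rightarrow> 'a set \<Rightarrow> 'a \<Rightarrow> 'a set" where
  "greedy_insert E T v = (if independent E (T \<union> {v}) then T \<union> {v} else T)"

lemma pd_phase2_eq_foldl: "pd_phase2 E S = foldl (greedy_insert E) {} S"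
  unfolding pd_phase2_def greedy_insert_def ..

lemma subset_foldl_greedy_insert: "T \<subseteq> foldl (greedy_insert E) T S"
proof (induction S arbitrary: T)
  case (Cons s S)
  have "T \<subseteq> greedy_insert E T s" by (auto simp: greedy_insert_def)
  also have "\<dots> \<subseteq> foldl (greedy_insert E) (greedy_insert E T s) S" by (rule Cons.IH)
  finally show ?case by simp
qed simp

lemma foldl_greedy_insert_subset: "foldl (greedy_insert E) T S \<subseteq> T \<union> set S"
proof (induction S arbitrary: T)
  case (Cons s S)
  have "foldl (greedy_insert E) (greedy_insert E T s) S \<subseteq> greedy_insert E T s \<union> set S"
    by (rule Cons.IH)
  also have "\<dots> \<subseteq> T \<union> set (s # S)" by (auto simp: greedy_insert_def)
  finally show ?case by simp
qed simp

lemma independent_insert_nbr: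
  assumes "symp E" "irreflp E" "independent E T" "\<not> independent E (insert s T)"
  obtains y where "y \<in> T" "E y s"
proof -
  obtain a b where ab: "a \<in> insert s T" "b \<in> insert s T" "E a b"
    using assms(4) unfolding independent_def by blast
  have "a \<noteq> b" using ab(3) assms(2) by (auto simp: irreflp_def)
  moreover have "\<not> (a \<in> T \<and> b \<in> T)"
    using ab(3) assms(3) by (auto simp: independent_def)
  ultimately have "a = s \<and> b \<in> T \<or> b = s \<and> a \<in> T"
    using ab(1,2) by auto
  then show ?thesis
    using that ab(3) sympD[OF assms(1) ab(3)] by auto
qed

lemma foldl_greedy_insert_blocked:
  assumes "symp E" "irreflp E" "independent E T"
    and "x \<in> set S" "x \<notin> foldl (greedy_insert E) T S"
  shows "\<exists>u \<in> foldl (greedy_insert E) T S. E u x \<and> (u \<in> T \<or> x \<in> after S u)"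
  using assms(3-)
proof (induction S arbitrary: T)
  case (Cons s S)
  define T' where "T' = greedy_insert E T s"
  have out: "foldl (greedy_insert E) T (s # S) = foldl (greedy_insert E) T' S"
    by (simp add: T'_def)
  have T': "T \<subseteq> T'" "T' \<subseteq> insert s T" "independent E T'"
    using Cons.prems(1) by (auto simp: T'_def greedy_insert_def)
  show ?case
  proof (cases "x = s")
    case True
    have "s \<notin> T'"
      using Cons.prems(3) subset_foldl_greedy_insert[of T' E S] True out by auto
    then have "\<not> independent E (insert s T)"
      by (auto simp: T'_def greedy_insert_def split: if_splits)
    then obtain y where "y \<in> T" "E y s"
      using independent_insert_nbr[OF assms(1,2) Cons.prems(1)] by blast
    then show ?thesis
      unfolding out using True T'(1) subset_foldl_greedy_insert[of T' E S] by blast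
  next
    case False
    have "x \<in> set S" "x \<notin> foldl (greedy_insert E) T' S"
      using Cons.prems(2,3) False out by auto
    then obtain u where u: "u \<in> foldl (greedy_insert E) T' S" "E u x" "u \<in> T' \<or> x \<in> after S u"
      using Cons.IH[OF T'(3)] by blast
    have "u \<in> T \<or> x \<in> after (s # S) u"
      using u(3) T'(2) after_subset[of S u] \<open>x \<in> set S\<close> by auto
    then show ?thesis unfolding out using u(1,2) by blast
  qed
qed simp

lemma pd_phase2_subset: "pd_phase2 E S \<subseteq> set S"
  using foldl_greedy_insert_subset[of E "{}" S] by (simp add: pd_phase2_eq_foldl)

lemma pd_phase2_blocked:
  assumes "symp E" "irreflp E" "x \<in> set S" "x \<notin> pd_phase2 E S"
  shows "\<exists>u \<in> pd_phase2 E S. E u x \<and> x \<in> after S u"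
  using foldl_greedy_insert_blocked[OF assms(1,2), of "{}" x S] assms(3,4)
  by (simp add: pd_phase2_eq_foldl independent_def)

definition nbr_weight :: "('a \<Rightarrow> 'a \<Rightarrow> bool) \<Rightarrow> 'a list \<Rightarrow> ('a \<Rightarrow> real) \<Rightarrow> 'a \<Rightarrow> real" where
  "nbr_weight E S w v = (\<Sum>u\<in>{u \<in> set S. E v u}. w u)"

fun tight_stack :: "('a set \<Rightarrow> real) \<Rightarrow> ('a \<Rightarrow> 'a \<Rightarrow> bool) \<Rightarrow> 'a list \<Rightarrow> ('a \<Rightarrow> real) \<Rightarrow> bool" where
  "tight_stack f E [] w \<longleftrightarrow> True"
| "tight_stack f E (s # S) w \<longleftrightarrow>
     tight_stack f E S w \<and> s \<notin> set S \<and> w s + nbr_weight E S w s = marginal f (set S) s"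

lemma tight_stack_cong:
  "(\<And>x. x \<in> set S \<Longrightarrow> w x = w' x) \<Longrightarrow> tight_stack f E S w = tight_stack f E S w'"
proof (induction S)
  case (Cons s S)
  then have "nbr_weight E S w s = nbr_weight E S w' s"
    unfolding nbr_weight_def by (intro sum.cong) auto
  with Cons show ?case by simp
qed simp

lemma tight_stack_charge_le:
  assumes "tight_stack f E S w" "submodular_on V f" "set S \<subseteq> V" "f {} = 0" "T \<subseteq> set S"
  shows "(\<Sum>u\<in>T. w u + (\<Sum>x\<in>{x \<in> after S u. E u x}. w x)) \<le> f T"
  using assms(1,3,5)
proof (induction S arbitrary: T)
  case Nil
  then show ?case using assms(4) by simp
next
  case (Cons s S)
  let ?charge = "\<lambda>S u. w u + (\<Sum>x\<in>{x \<in> after S u. E u x}. w x)"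
  have s: "s \<notin> set S" "s \<in> V" and T': "T - {s} \<subseteq> set S"
    using Cons.prems by auto
  have "(\<Sum>u\<in>T - {s}. ?charge (s # S) u) = (\<Sum>u\<in>T - {s}. ?charge S u)"
    by (intro sum.cong) auto
  also have "\<dots> \<le> f (T - {s})"
    using Cons.IH[of "T - {s}"] T' Cons.prems by simp
  finally have rest: "(\<Sum>u\<in>T - {s}. ?charge (s # S) u) \<le> f (T - {s})" .
  show ?case
  proof (cases "s \<in> T")
    case True
    have "(\<Sum>u\<in>T. ?charge (s # S) u) = ?charge (s # S) s + (\<Sum>u\<in>T - {s}. ?charge (s # S) u)"
      using sum.remove[OF finite_subset[OF Cons.prems(3) finite_set] True] .
    also have "?charge (s # S) s = marginal f (set S) s"
      using Cons.prems(1) by (simp add: nbr_weight_def)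
    also have "marginal f (set S) s \<le> marginal f (T - {s}) s"
      using submodular_on_diminishing_returns[OF assms(2) T'] s Cons.prems(2) by auto
    also have "marginal f (T - {s}) s = f T - f (T - {s})"
      using True by (simp add: marginal_def insert_absorb)
    finally show ?thesis using rest by simp
  next
    case False
    then show ?thesis using rest by simp
  qed
qed

text \<open>Every vertex that Phase 2 discards is blocked by a kept neighbour pushed after it, so
  its weight is part of that neighbour's charge.\<close>

lemma tight_stack_weight_le_pd_phase2:
  assumes "symp E" "irreflp E" "tight_stack f E S w" "\<And>u. 0 \<le> w u"
    and "submodular_on V f" "set S \<subseteq> V" "f {} = 0"
  shows "(\<Sum>u\<in>set S. w u) \<le> f (pd_phase2 E S)"
proof -
  define T where "T = pd_phase2 E S"
  define C where "C u = {x \<in> after S u. E u x}" for u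
  have T: "T \<subseteq> set S"
    unfolding T_def by (rule pd_phase2_subset)
  then have finT: "finite T"
    by (rule finite_subset) simp
  have "\<exists>u. u \<in> T \<and> x \<in> C u" if "x \<in> set S - T" for x
    using pd_phase2_blocked[OF assms(1,2), of x S] that unfolding T_def C_def by auto
  then obtain b where b: "\<And>x. x \<in> set S - T \<Longrightarrow> b x \<in> T \<and> x \<in> C (b x)"
    by metis
  have finC: "finite (C u)" for u
  proof (rule finite_subset)
    show "C u \<subseteq> set S" using after_subset[of S u] unfolding C_def by blast
  qed simp
  have "(\<Sum>x\<in>set S - T. w x) = (\<Sum>u\<in>T. \<Sum>x | x \<in> set S - T \<and> b x = u. w x)"
    using b finT by (intro sum.group[symmetric]) auto
  also have "\<dots> \<le> (\<Sum>u\<in>T. \<Sum>x\<in>C u. w x)"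
  proof (rule sum_mono)
    fix u
    have "{x. x \<in> set S - T \<and> b x = u} \<subseteq> C u"
    proof
      fix x assume "x \<in> {x. x \<in> set S - T \<and> b x = u}"
      then show "x \<in> C u" using b[of x] by auto
    qed
    then show "(\<Sum>x | x \<in> set S - T \<and> b x = u. w x) \<le> (\<Sum>x\<in>C u. w x)"
      using finC assms(4) by (intro sum_mono2) auto
  qed
  finally have "(\<Sum>u\<in>set S. w u) \<le> (\<Sum>u\<in>T. w u + (\<Sum>x\<in>C u. w x))"
    using T by (simp add: sum.subset_diff[of T "set S"] sum.distrib)
  also have "\<dots> \<le> f T"
    unfolding C_def using tight_stack_charge_le[OF assms(3,5,6,7) T] .
  finally show ?thesis unfolding T_def .
qed

section \<open>Phase 1\<close>

lemma expectation_bind_pmf_finite: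
  fixes G :: "'b \<Rightarrow> real"
  assumes "finite (set_pmf M)" "\<And>x. x \<in> set_pmf M \<Longrightarrow> finite (set_pmf (F x))"
  shows "measure_pmf.expectation (bind_pmf M F) G
    = measure_pmf.expectation M (\<lambda>x. measure_pmf.expectation (F x) G)"
proof -
  have "measure_pmf.expectation (bind_pmf M F) G
      = (\<Sum>a\<in>set_pmf M. pmf M a *\<^sub>R measure_pmf.expectation (F a) G)"
    using assms by (intro pmf_expectation_bind) auto
  also have "\<dots> = measure_pmf.expectation M (\<lambda>x. measure_pmf.expectation (F x) G)"
    using assms by (subst integral_measure_pmf[of "set_pmf M"]) auto
  finally show ?thesis .
qed

lemma expectation_mono_pmf_finite:
  fixes G H :: "'b \<Rightarrow> real"
  assumes "finite (set_pmf M)" "\<And>x. x \<in> set_pmf M \<Longrightarrow> G x \<le> H x"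
  shows "measure_pmf.expectation M G \<le> measure_pmf.expectation M H"
  using assms
  by (intro integral_mono_AE integrable_measure_pmf_finite) (auto simp: AE_measure_pmf_iff)

definition pd_push :: "('a \<Rightarrow> 'a \<Rightarrow> bool) \<Rightarrow> ('a set \<Rightarrow> real) \<Rightarrow> 'a list \<Rightarrow> ('a \<Rightarrow> real) \<Rightarrow> 'a
    \<Rightarrow> 'a list \<times> ('a \<Rightarrow> real)" where
  "pd_push E f S w v = (v # S, w(v := marginal f (set S) v - nbr_weight E S w v))"

lemma set_pmf_pd_step:
  assumes "st \<in> set_pmf (pd_step E f \<beta> p (S, w) v)"
  shows "st = (S, w) \<or> (1 + \<beta>) * nbr_weight E S w v < marginal f (set S) v \<and> st = pd_push E f S w v"
  using assms
  by (auto simp: pd_step_def pd_push_def marginal_def nbr_weight_def Let_def split: if_splits)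

lemma finite_set_pmf_pd_step: "finite (set_pmf (pd_step E f \<beta> p st v))"
proof -
  obtain S w where st: "st = (S, w)" by force
  have "set_pmf (pd_step E f \<beta> p st v) \<subseteq> {(S, w), pd_push E f S w v}"
  proof
    fix st' assume "st' \<in> set_pmf (pd_step E f \<beta> p st v)"
    then show "st' \<in> {(S, w), pd_push E f S w v}"
      using set_pmf_pd_step[of st' E f \<beta> p S w v] unfolding st by auto
  qed
  then show ?thesis by (rule finite_subset) simp
qed

lemma expectation_pd_step:
  assumes "0 \<le> p" "p \<le> 1"
  shows "measure_pmf.expectation (pd_step E f \<beta> p (S, w) v) G =
    (if (1 + \<beta>) * nbr_weight E S w v < marginal f (set S) v
     then p * G (pd_push E f S w v) + (1 - p) * G (S, w) else G (S, w))"
  using assms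
  by (simp add: pd_step_def pd_push_def marginal_def nbr_weight_def Let_def algebra_simps)

lemma pd_phase1_Nil: "pd_phase1 [] E f \<beta> p = return_pmf ([], \<lambda>_. 0)"
  by (simp add: pd_phase1_def)

lemma pd_phase1_snoc:
  "pd_phase1 (xs @ [v]) E f \<beta> p = bind_pmf (pd_phase1 xs E f \<beta> p) (\<lambda>st. pd_step E f \<beta> p st v)"
  by (simp add: pd_phase1_def)

lemma finite_set_pmf_pd_phase1: "finite (set_pmf (pd_phase1 xs E f \<beta> p))"
  by (induction xs rule: rev_induct)
    (simp_all add: pd_phase1_Nil pd_phase1_snoc finite_set_pmf_pd_step)

lemma pd_phase1_stack_subset:
  "st \<in> set_pmf (pd_phase1 xs E f \<beta> p) \<Longrightarrow> set (fst st) \<subseteq> set xs"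
proof (induction xs arbitrary: st rule: rev_induct)
  case (snoc v xs)
  then obtain S w where Sw: "(S, w) \<in> set_pmf (pd_phase1 xs E f \<beta> p)"
      "st \<in> set_pmf (pd_step E f \<beta> p (S, w) v)"
    by (auto simp: pd_phase1_snoc)
  have "set S \<subseteq> set xs" using snoc.IH[OF Sw(1)] by simp
  then show ?case using set_pmf_pd_step[OF Sw(2)] by (auto simp: pd_push_def)
qed (simp add: pd_phase1_Nil)

fun pd_invariant :: "('a set \<Rightarrow> real) \<Rightarrow> ('a \<Rightarrow> 'a \<Rightarrow> bool) \<Rightarrow> real
    \<Rightarrow> 'a list \<times> ('a \<Rightarrow> real) \<Rightarrow> bool" where
  "pd_invariant f E \<beta> (S, w) \<longleftrightarrow> tight_stack f E S w \<and> (\<forall>u. 0 \<le> w u)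
     \<and> f (set S) \<le> (1 + \<beta>) / \<beta> * (\<Sum>u\<in>set S. w u)"

lemma pd_invariant_pd_push:
  assumes "0 < \<beta>" "v \<notin> set S" "pd_invariant f E \<beta> (S, w)"
    and push: "(1 + \<beta>) * nbr_weight E S w v < marginal f (set S) v"
  shows "pd_invariant f E \<beta> (pd_push E f S w v)"
proof -
  define g c where "g = marginal f (set S) v" and "c = nbr_weight E S w v"
  define w' where "w' = w(v := g - c)"
  have I: "tight_stack f E S w" "\<And>u. 0 \<le> w u" "f (set S) \<le> (1 + \<beta>) / \<beta> * (\<Sum>u\<in>set S. w u)"
    using assms(3) by auto
  have "0 \<le> c" unfolding c_def nbr_weight_def using I(2) by (simp add: sum_nonneg)
  then have "0 \<le> \<beta> * c" using assms(1) by simp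
  then have gc: "c \<le> g" "\<beta> * g \<le> (1 + \<beta>) * (g - c)"
    using push unfolding g_def c_def by (auto simp: algebra_simps)
  have on_S: "w' u = w u" if "u \<in> set S" for u
    using that assms(2) by (auto simp: w'_def)
  have "tight_stack f E S w'"
    using tight_stack_cong[of S w' w, OF on_S] I(1) by simp
  moreover have "nbr_weight E S w' v = c"
    unfolding c_def nbr_weight_def using on_S by (intro sum.cong) auto
  ultimately have "tight_stack f E (v # S) w'"
    using assms(2) by (simp add: w'_def g_def)
  moreover have "\<forall>u. 0 \<le> w' u"
    using I(2) gc by (simp add: w'_def)
  moreover have "f (insert v (set S)) \<le> (1 + \<beta>) / \<beta> * (\<Sum>u\<in>insert v (set S). w' u)"
  proof -
    have "(\<Sum>u\<in>set S. w' u) = (\<Sum>u\<in>set S. w u)"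
      using on_S by (rule sum.cong[OF refl])
    then have sum': "(\<Sum>u\<in>insert v (set S). w' u) = (g - c) + (\<Sum>u\<in>set S. w u)"
      using assms(2) by (simp add: w'_def)
    have "g \<le> (1 + \<beta>) / \<beta> * (g - c)"
      using gc(2) assms(1) by (simp add: field_simps)
    then have "f (set S) + g \<le> (1 + \<beta>) / \<beta> * ((g - c) + (\<Sum>u\<in>set S. w u))"
      using I(3) by (simp add: distrib_left)
    then show ?thesis unfolding sum' by (simp add: g_def marginal_def)
  qed
  moreover have "pd_push E f S w v = (v # S, w')"
    by (simp add: pd_push_def w'_def g_def c_def)
  ultimately show ?thesis by simp
qed

lemma pd_invariant_pd_phase1:
  assumes "f {} = 0" "0 < \<beta>" "distinct xs" "st \<in> set_pmf (pd_phase1 xs E f \<beta> p)"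
  shows "pd_invariant f E \<beta> st"
  using assms(3,4)
proof (induction xs arbitrary: st rule: rev_induct)
  case Nil
  then show ?case using assms(1) by (simp add: pd_phase1_Nil)
next
  case (snoc v xs)
  then obtain S w where Sw: "(S, w) \<in> set_pmf (pd_phase1 xs E f \<beta> p)"
      "st \<in> set_pmf (pd_step E f \<beta> p (S, w) v)"
    by (auto simp: pd_phase1_snoc)
  have vS: "v \<notin> set S" using pd_phase1_stack_subset[OF Sw(1)] snoc.prems(1) by auto
  have inv: "pd_invariant f E \<beta> (S, w)"
    using snoc.prems(1) by (intro snoc.IH[OF _ Sw(1)]) simp
  from set_pmf_pd_step[OF Sw(2)] show ?case
    using inv pd_invariant_pd_push[OF assms(2) vS inv] by auto
qed

lemma prob_pd_phase1_mem_le: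
  assumes "0 \<le> p" "p \<le> 1" "distinct xs"
  shows "measure_pmf.prob (pd_phase1 xs E f \<beta> p) {st. u \<in> set (fst st)} \<le> p"
  using assms(3)
proof (induction xs rule: rev_induct)
  case Nil
  then show ?case using assms(1) by (simp add: pd_phase1_Nil)
next
  case (snoc v xs)
  let ?D = "pd_phase1 xs E f \<beta> p" and ?X = "{st. u \<in> set (fst st)}"
  have fin: "finite (set_pmf ?D)" by (rule finite_set_pmf_pd_phase1)
  have "measure_pmf.prob (pd_phase1 (xs @ [v]) E f \<beta> p) ?X
      = measure_pmf.expectation (pd_phase1 (xs @ [v]) E f \<beta> p) (indicator ?X)"
    by simp
  also have "\<dots> = measure_pmf.expectation ?D
      (\<lambda>st. measure_pmf.expectation (pd_step E f \<beta> p st v) (indicator ?X))"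
    unfolding pd_phase1_snoc using fin finite_set_pmf_pd_step by (rule expectation_bind_pmf_finite)
  also have "\<dots> = measure_pmf.expectation ?D (\<lambda>st. measure_pmf.prob (pd_step E f \<beta> p st v) ?X)"
    by simp
  also have "\<dots> \<le> measure_pmf.expectation ?D (\<lambda>st. if u = v then p else indicator ?X st)"
  proof (rule expectation_mono_pmf_finite[OF fin])
    fix st assume st: "st \<in> set_pmf ?D"
    obtain S w where [simp]: "st = (S, w)" by force
    have "v \<notin> set S" using pd_phase1_stack_subset[OF st] snoc.prems by auto
    then show "measure_pmf.prob (pd_step E f \<beta> p st v) ?X \<le> (if u = v then p else indicator ?X st)"
      using expectation_pd_step[OF assms(1,2), of E f \<beta> S w v "indicator ?X"] assms(1,2)
      by (auto simp: pd_push_def indicator_def algebra_simps)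
  qed
  also have "\<dots> \<le> p"
    using snoc by (cases "u = v") auto
  finally show ?case .
qed

section \<open>The potential\<close>

definition later_nbr_count :: "('a \<Rightarrow> 'a \<Rightarrow> bool) \<Rightarrow> 'a set \<Rightarrow> 'a list \<Rightarrow> 'a \<Rightarrow> nat" where
  "later_nbr_count E T xs u = card {y \<in> T \<inter> after xs u. E y u}"

lemma later_nbr_count_snoc:
  assumes "u \<in> set xs" "v \<notin> set xs"
  shows "later_nbr_count E T (xs @ [v]) u = later_nbr_count E T xs u + of_bool (v \<in> T \<and> E v u)"
proof -
  have "{y \<in> T \<inter> after (xs @ [v]) u. E y u}
      = (if v \<in> T \<and> E v u then insert v {y \<in> T \<inter> after xs u. E y u}
         else {y \<in> T \<inter> after xs u. E y u})"
    using after_snoc[OF assms(1)] by auto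
  moreover have "finite {y \<in> T \<inter> after xs u. E y u}"
    by (rule finite_subset[of _ "set xs"]) (use after_subset[of xs u] in auto)
  moreover have "v \<notin> after xs u"
    using after_subset[of xs u] assms(2) by blast
  ultimately show ?thesis unfolding later_nbr_count_def by simp
qed

lemma later_nbr_count_snoc_last: "v \<notin> set xs \<Longrightarrow> later_nbr_count E T (xs @ [v]) v = 0"
  by (simp add: later_nbr_count_def after_snoc_last)

lemma later_nbr_count_eq_0:
  assumes "independent E T" "u \<in> T"
  shows "later_nbr_count E T xs u = 0"
proof -
  have empty: "{y \<in> T \<inter> after xs u. E y u} = {}"
    using assms unfolding independent_def by blast
  show ?thesis unfolding later_nbr_count_def empty by simp
qed

lemma later_nbr_count_le:
  assumes "k_independence_ordering k vs E" "symp E" "distinct vs" "independent E T" "u \<in> set vs"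
  shows "later_nbr_count E T vs u \<le> k"
proof -
  obtain i where i: "i < length vs" "vs ! i = u"
    using assms(5) by (auto simp: in_set_conv_nth)
  let ?I = "{y \<in> T \<inter> after vs u. E y u}"
  have "?I \<subseteq> {x. E (vs ! i) x} \<inter> set (drop i vs)"
  proof
    fix y assume y: "y \<in> ?I"
    then have "E u y" using sympD[OF assms(2)] by blast
    moreover have "y \<in> set (drop i vs)"
      using y after_nth[OF assms(3) i(1)] set_drop_subset_set_drop[of i "Suc i" vs] i(2) by auto
    ultimately show "y \<in> {x. E (vs ! i) x} \<inter> set (drop i vs)" using i(2) by simp
  qed
  moreover have "independent E ?I"
    using assms(4) unfolding independent_def by blast
  ultimately show ?thesis
    using assms(1) i(1) unfolding k_independence_ordering_def later_nbr_count_def by blast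
qed

text \<open>It vanishes initially and does not increase in expectation, while at the end
  \<open>f (S \<union> T)\<close> exceeds it by at most a constant times the weight of \<open>S\<close>.\<close>

fun pd_potential :: "('a \<Rightarrow> 'a \<Rightarrow> bool) \<Rightarrow> ('a set \<Rightarrow> real) \<Rightarrow> real \<Rightarrow> real \<Rightarrow> 'a set \<Rightarrow> 'a list
    \<Rightarrow> 'a list \<times> ('a \<Rightarrow> real) \<Rightarrow> real" where
  "pd_potential E f \<beta> p T xs (S, w) =
     f (set S \<union> (T \<inter> set xs)) - f (set S)
     - (1 + \<beta>) * (\<Sum>u\<in>set S. w u * later_nbr_count E T xs u)
     - (1 - p) / p * (\<Sum>u\<in>set S \<inter> T. w u)"

lemma sum_weighted_later_nbr_count_snoc:
  fixes w :: "'a \<Rightarrow> real"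
  assumes "set S \<subseteq> set xs" "v \<notin> set xs"
  shows "(\<Sum>u\<in>set S. w u * later_nbr_count E T (xs @ [v]) u)
    = (\<Sum>u\<in>set S. w u * later_nbr_count E T xs u) + of_bool (v \<in> T) * nbr_weight E S w v"
proof -
  have "(\<Sum>u\<in>set S. w u * later_nbr_count E T (xs @ [v]) u)
      = (\<Sum>u\<in>set S. w u * later_nbr_count E T xs u + (if v \<in> T \<and> E v u then w u else 0))"
  proof (rule sum.cong[OF refl])
    fix u assume "u \<in> set S"
    then have "u \<in> set xs" using assms(1) by blast
    then show "w u * later_nbr_count E T (xs @ [v]) u
        = w u * later_nbr_count E T xs u + (if v \<in> T \<and> E v u then w u else 0)"
      using later_nbr_count_snoc[OF _ assms(2)] by (simp add: algebra_simps)
  qed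
  also have "\<dots> = (\<Sum>u\<in>set S. w u * later_nbr_count E T xs u)
      + (\<Sum>u\<in>set S. if v \<in> T \<and> E v u then w u else 0)"
    by (rule sum.distrib)
  also have "(\<Sum>u\<in>set S. if v \<in> T \<and> E v u then w u else 0) = of_bool (v \<in> T) * nbr_weight E S w v"
    by (cases "v \<in> T") (simp_all add: nbr_weight_def sum.inter_filter)
  finally show ?thesis .
qed

context
  fixes V :: "'a set" and E :: "'a \<Rightarrow> 'a \<Rightarrow> bool" and f :: "'a set \<Rightarrow> real"
    and \<beta> p :: real and T :: "'a set" and xs :: "'a list" and v :: 'a
    and S :: "'a list" and w :: "'a \<Rightarrow> real"
  assumes submod: "submodular_on V f" and xs: "set xs \<subseteq> V" "v \<in> V" "v \<notin> set xs"
    and S: "set S \<subseteq> set xs"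
begin

private lemma marginal_union_le:
  "marginal f (set S \<union> (T \<inter> set xs)) v \<le> marginal f (set S) v"
  using submodular_on_diminishing_returns[OF submod, of "set S" "set S \<union> (T \<inter> set xs)" v] xs S
  by auto

lemma pd_potential_skip:
  "pd_potential E f \<beta> p T (xs @ [v]) (S, w)
    \<le> pd_potential E f \<beta> p T xs (S, w)
      + of_bool (v \<in> T) * (marginal f (set S) v - (1 + \<beta>) * nbr_weight E S w v)"
proof (cases "v \<in> T")
  case True
  then show ?thesis
    using marginal_union_le sum_weighted_later_nbr_count_snoc[OF S xs(3), of w E T]
    by (simp add: marginal_def algebra_simps)
next
  case False
  then show ?thesis
    using sum_weighted_later_nbr_count_snoc[OF S xs(3), of w E T] by simp
qed

lemma pd_potential_push:
  "pd_potential E f \<beta> p T (xs @ [v]) (pd_push E f S w v)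
    \<le> pd_potential E f \<beta> p T xs (S, w)
      - of_bool (v \<in> T) * ((1 + \<beta>) * nbr_weight E S w v
          + (1 - p) / p * (marginal f (set S) v - nbr_weight E S w v))"
proof -
  define g c \<kappa> where "g = marginal f (set S) v" and "c = nbr_weight E S w v"
    and "\<kappa> = (1 - p) / p"
  define w' where "w' = w(v := g - c)"
  have vS: "v \<notin> set S" using S xs(3) by auto
  have w'v: "w' v = g - c" by (simp add: w'_def)
  have on_S: "(\<Sum>u\<in>U. w' u * h u) = (\<Sum>u\<in>U. w u * h u)" if "U \<subseteq> set S" for U h
    using vS that by (intro sum.cong) (auto simp: w'_def)
  have push: "pd_push E f S w v = (v # S, w')"
    by (simp add: pd_push_def w'_def g_def c_def)
  have f_part: "f (insert v (set S) \<union> (T \<inter> set (xs @ [v]))) - f (insert v (set S))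
      \<le> f (set S \<union> (T \<inter> set xs)) - f (set S)"
    using marginal_union_le by (auto simp: marginal_def Int_insert_right insert_absorb)
  have Q: "(\<Sum>u\<in>insert v (set S). w' u * later_nbr_count E T (xs @ [v]) u)
      = (\<Sum>u\<in>set S. w u * later_nbr_count E T xs u) + of_bool (v \<in> T) * c"
    using vS on_S[OF order_refl] later_nbr_count_snoc_last[OF xs(3)]
      sum_weighted_later_nbr_count_snoc[OF S xs(3)]
    by (simp add: c_def)
  have R: "(\<Sum>u\<in>insert v (set S) \<inter> T. w' u) = (\<Sum>u\<in>set S \<inter> T. w u) + of_bool (v \<in> T) * (g - c)"
    using vS w'v on_S[of "set S \<inter> T" "\<lambda>_. 1"] by (simp add: Int_insert_left)
  show ?thesis
    unfolding push pd_potential.simps list.set(2) Q R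
      g_def[symmetric] c_def[symmetric] \<kappa>_def[symmetric]
    using f_part by (cases "v \<in> T") (simp_all add: algebra_simps)
qed

lemma expectation_pd_potential_pd_step:
  assumes "\<And>u. 0 \<le> w u" "0 < \<beta>" "0 < p" "p < 1"
  shows "measure_pmf.expectation (pd_step E f \<beta> p (S, w) v) (pd_potential E f \<beta> p T (xs @ [v]))
    \<le> pd_potential E f \<beta> p T xs (S, w)"
proof -
  define g c \<Phi> where "g = marginal f (set S) v" and "c = nbr_weight E S w v"
    and "\<Phi> = pd_potential E f \<beta> p T xs (S, w)"
  have "0 \<le> c" unfolding c_def nbr_weight_def using assms(1) by (simp add: sum_nonneg)
  note skip = pd_potential_skip[folded g_def c_def \<Phi>_def]
  note push = pd_potential_push[folded g_def c_def \<Phi>_def]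
  show ?thesis
  proof (cases "(1 + \<beta>) * c < g")
    case True
    have "p * pd_potential E f \<beta> p T (xs @ [v]) (pd_push E f S w v)
          + (1 - p) * pd_potential E f \<beta> p T (xs @ [v]) (S, w)
        \<le> p * (\<Phi> - of_bool (v \<in> T) * ((1 + \<beta>) * c + (1 - p) / p * (g - c)))
          + (1 - p) * (\<Phi> + of_bool (v \<in> T) * (g - (1 + \<beta>) * c))"
      using skip push assms(3,4) by (intro add_mono mult_left_mono) auto
    also have "\<dots> = \<Phi> - of_bool (v \<in> T) * (\<beta> + p) * c"
      \<comment> \<open>the coefficient \<open>(1 - p) / p\<close> is what makes the marginal gain \<open>g\<close> cancel\<close>
      using assms(3) by (simp add: field_simps)
    also have "\<dots> \<le> \<Phi>"
      using \<open>0 \<le> c\<close> assms(2,3) by simp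
    finally show ?thesis
      using True assms(3,4) by (simp add: expectation_pd_step g_def c_def \<Phi>_def)
  next
    case False
    then have "of_bool (v \<in> T) * (g - (1 + \<beta>) * c) \<le> 0"
      by simp
    then show ?thesis
      using False skip assms(3,4) by (simp add: expectation_pd_step g_def c_def \<Phi>_def)
  qed
qed

end

lemma expectation_pd_potential_le_0:
  assumes "submodular_on V f" "f {} = 0" "distinct xs" "set xs \<subseteq> V"
    and "0 < \<beta>" "0 < p" "p < 1"
  shows "measure_pmf.expectation (pd_phase1 xs E f \<beta> p) (pd_potential E f \<beta> p T xs) \<le> 0"
  using assms(3,4)
proof (induction xs rule: rev_induct)
  case Nil
  then show ?case by (simp add: pd_phase1_Nil)
next
  case (snoc v xs)
  let ?D = "pd_phase1 xs E f \<beta> p"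
  have fin: "finite (set_pmf ?D)" by (rule finite_set_pmf_pd_phase1)
  have "measure_pmf.expectation (pd_phase1 (xs @ [v]) E f \<beta> p) (pd_potential E f \<beta> p T (xs @ [v]))
      = measure_pmf.expectation ?D
          (\<lambda>st. measure_pmf.expectation (pd_step E f \<beta> p st v) (pd_potential E f \<beta> p T (xs @ [v])))"
    unfolding pd_phase1_snoc using fin finite_set_pmf_pd_step by (rule expectation_bind_pmf_finite)
  also have "\<dots> \<le> measure_pmf.expectation ?D (pd_potential E f \<beta> p T xs)"
  proof (rule expectation_mono_pmf_finite[OF fin])
    fix st assume st: "st \<in> set_pmf ?D"
    obtain S w where [simp]: "st = (S, w)" by force
    have "pd_invariant f E \<beta> (S, w)"
      using pd_invariant_pd_phase1[of f \<beta> xs st E p] assms(2,5) st snoc.prems(1) by simp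
    then have nonneg: "\<And>u. 0 \<le> w u" by simp
    have S: "set S \<subseteq> set xs" using pd_phase1_stack_subset[OF st] by simp
    have xs: "set xs \<subseteq> V" "v \<in> V" "v \<notin> set xs" using snoc.prems by auto
    show "measure_pmf.expectation (pd_step E f \<beta> p st v) (pd_potential E f \<beta> p T (xs @ [v]))
        \<le> pd_potential E f \<beta> p T xs st"
      using expectation_pd_potential_pd_step[OF assms(1) xs S nonneg assms(5-7)] by simp
  qed
  also have "\<dots> \<le> 0"
    using snoc by auto
  finally show ?case .
qed

section \<open>The approximation guarantee\<close>

lemma sum_weighted_counts_le:
  fixes w :: "'a \<Rightarrow> real" and n :: "'a \<Rightarrow> nat"
  assumes "finite U" "\<And>u. u \<in> U \<Longrightarrow> n u \<le> k" "\<And>u. u \<in> U \<Longrightarrow> u \<in> T \<Longrightarrow> n u = 0"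
    and "\<And>u. 0 \<le> w u" "1 \<le> k" "0 \<le> a" "0 \<le> b"
  shows "a * (\<Sum>u\<in>U. w u * n u) + b * (\<Sum>u\<in>U \<inter> T. w u) \<le> real k * max b a * (\<Sum>u\<in>U. w u)"
proof -
  have "a * (\<Sum>u\<in>U. w u * n u) + b * (\<Sum>u\<in>U \<inter> T. w u)
      = (\<Sum>u\<in>U. a * (w u * n u) + b * (if u \<in> T then w u else 0))"
    using assms(1) by (simp add: sum.distrib sum_distrib_left sum.inter_restrict)
  also have "\<dots> \<le> (\<Sum>u\<in>U. real k * max b a * w u)"
  proof (rule sum_mono)
    fix u assume u: "u \<in> U"
    have ka: "a \<le> real k * max b a" "b \<le> real k * max b a"
      using assms(5-7) mult_right_mono[of 1 "real k" "max b a"] by auto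
    show "a * (w u * n u) + b * (if u \<in> T then w u else 0) \<le> real k * max b a * w u"
    proof (cases "u \<in> T")
      case True
      then show ?thesis using assms(3)[OF u] mult_right_mono[OF ka(2) assms(4)] by simp
    next
      case False
      have "a * (w u * n u) \<le> a * (w u * k)"
        using assms(2)[OF u] assms(4,6) by (simp add: mult_left_mono)
      also have "\<dots> \<le> max b a * (w u * k)"
        using mult_right_mono[of a "max b a" "w u * k"] assms(4) by simp
      also have "\<dots> = real k * max b a * w u"
        by simp
      finally show ?thesis using False by simp
    qed
  qed
  also have "\<dots> = real k * max b a * (\<Sum>u\<in>U. w u)"
    by (simp add: sum_distrib_left)
  finally show ?thesis .
qed

lemma f_union_le_pd_potential:
  assumes graph: "simple_graph vs E" and ord: "k_independence_ordering k vs E" and k: "1 \<le> k"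
    and sub: "submodular_on (set vs) f" and f0: "f {} = 0"
    and \<beta>: "0 < \<beta>" and p: "0 < p" "p < 1"
    and T: "independent E T" "T \<subseteq> set vs"
    and inv: "pd_invariant f E \<beta> (S, w)" and S: "set S \<subseteq> set vs"
  shows "f (T \<union> set S) \<le> pd_potential E f \<beta> p T vs (S, w)
    + (real k * max ((1 - p) / p) (1 + \<beta>) + (1 + \<beta>) / \<beta>) * f (pd_phase2 E S)"
proof -
  define K B where "K = real k * max ((1 - p) / p) (1 + \<beta>)" and "B = (1 + \<beta>) / \<beta>"
  define W Q R where "W = (\<Sum>u\<in>set S. w u)"
    and "Q = (\<Sum>u\<in>set S. w u * later_nbr_count E T vs u)" and "R = (\<Sum>u\<in>set S \<inter> T. w u)"
  have E: "symp E" "irreflp E" "distinct vs"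
    using graph unfolding simple_graph_def symp_def irreflp_def by auto
  have I: "tight_stack f E S w" "\<And>u. 0 \<le> w u" "f (set S) \<le> B * W"
    using inv unfolding W_def B_def by auto
  have counts: "(1 + \<beta>) * Q + (1 - p) / p * R \<le> K * W"
    unfolding Q_def R_def W_def K_def
  proof (rule sum_weighted_counts_le)
    show "later_nbr_count E T vs u \<le> k" if "u \<in> set S" for u
      using later_nbr_count_le[OF ord E(1,3) T(1)] that S by auto
    show "later_nbr_count E T vs u = 0" if "u \<in> T" for u
      using later_nbr_count_eq_0[OF T(1) that] .
  qed (use I(2) k \<beta> p in auto)
  have out: "W \<le> f (pd_phase2 E S)"
    unfolding W_def using tight_stack_weight_le_pd_phase2[OF E(1,2) I(1,2) sub S f0] .
  have "f (T \<union> set S) = pd_potential E f \<beta> p T vs (S, w) + f (set S) + (1 + \<beta>) * Q + (1 - p) / p * R"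
    using T(2) by (simp add: Q_def R_def Un_commute Int_absorb2)
  also have "\<dots> \<le> pd_potential E f \<beta> p T vs (S, w) + (K + B) * W"
    using I(3) counts by (simp add: algebra_simps)
  also have "\<dots> \<le> pd_potential E f \<beta> p T vs (S, w) + (K + B) * f (pd_phase2 E S)"
    using out \<beta> by (simp add: K_def B_def mult_left_mono)
  finally show ?thesis unfolding K_def B_def .
qed

lemma expectation_f_union_le:
  assumes "simple_graph vs E" "k_independence_ordering k vs E" "1 \<le> k"
    and "submodular_on (set vs) f" "f {} = 0" "0 < \<beta>" "0 < p" "p < 1"
    and "independent E T" "T \<subseteq> set vs"
  shows "measure_pmf.expectation (pd_phase1 vs E f \<beta> p) (\<lambda>st. f (T \<union> set (fst st)))
    \<le> (real k * max ((1 - p) / p) (1 + \<beta>) + (1 + \<beta>) / \<beta>)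
      * measure_pmf.expectation (pd_rand vs E f \<beta> p) f"
proof -
  define D C where "D = pd_phase1 vs E f \<beta> p"
    and "C = real k * max ((1 - p) / p) (1 + \<beta>) + (1 + \<beta>) / \<beta>"
  have fin: "finite (set_pmf D)" unfolding D_def by (rule finite_set_pmf_pd_phase1)
  have dist: "distinct vs" using assms(1) by (simp add: simple_graph_def)
  have "measure_pmf.expectation D (\<lambda>st. f (T \<union> set (fst st)))
      \<le> measure_pmf.expectation D (\<lambda>st. pd_potential E f \<beta> p T vs st + C * f (pd_phase2 E (fst st)))"
  proof (rule expectation_mono_pmf_finite[OF fin])
    fix st assume st: "st \<in> set_pmf D"
    obtain S w where [simp]: "st = (S, w)" by force
    have inv: "pd_invariant f E \<beta> (S, w)"
      using pd_invariant_pd_phase1[of f \<beta> vs st E p] assms(5,6) dist st by (simp add: D_def)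
    have S: "set S \<subseteq> set vs"
      using pd_phase1_stack_subset[of st vs E f \<beta> p] st by (simp add: D_def)
    show "f (T \<union> set (fst st)) \<le> pd_potential E f \<beta> p T vs st + C * f (pd_phase2 E (fst st))"
      using f_union_le_pd_potential[OF assms inv S] by (simp add: C_def)
  qed
  also have "\<dots> = measure_pmf.expectation D (pd_potential E f \<beta> p T vs)
      + C * measure_pmf.expectation D (\<lambda>st. f (pd_phase2 E (fst st)))"
    using fin by (simp add: integrable_measure_pmf_finite)
  also have "measure_pmf.expectation D (pd_potential E f \<beta> p T vs) \<le> 0"
    unfolding D_def by (rule expectation_pd_potential_le_0[OF assms(4,5) dist order_refl assms(6-8)])
  also have "measure_pmf.expectation D (\<lambda>st. f (pd_phase2 E (fst st)))
      = measure_pmf.expectation (pd_rand vs E f \<beta> p) f"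
    by (simp add: D_def pd_rand_def)
  finally show ?thesis by (simp add: C_def D_def)
qed

lemma expectation_f_union_ge:
  assumes "distinct vs" "submodular_on (set vs) f" "\<forall>A. A \<subseteq> set vs \<longrightarrow> 0 \<le> f A"
    and "T \<subseteq> set vs" "0 \<le> p" "p \<le> 1"
  shows "(1 - p) * f T \<le> measure_pmf.expectation (pd_phase1 vs E f \<beta> p) (\<lambda>st. f (T \<union> set (fst st)))"
proof -
  define N where "N = map_pmf (\<lambda>st. set (fst st)) (pd_phase1 vs E f \<beta> p)"
  have "(1 - p) * f (T \<union> {}) \<le> measure_pmf.expectation N (\<lambda>A. f (T \<union> A))"
  proof (rule submodular_sampling_ge[where V = "set vs"])
    show "submodular_on (set vs) (\<lambda>A. f (T \<union> A))"
      using assms(2,4) by (rule submodular_on_union_left)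
    show "0 \<le> f (T \<union> A)" if "A \<subseteq> set vs" for A
      using assms(3,4) that by simp
    show "A \<subseteq> set vs" if A: "A \<in> set_pmf N" for A
    proof -
      obtain st where "st \<in> set_pmf (pd_phase1 vs E f \<beta> p)" "A = set (fst st)"
        using A unfolding N_def set_map_pmf by blast
      then show ?thesis using pd_phase1_stack_subset[of st vs E f \<beta> p] by simp
    qed
    show "measure_pmf.prob N {A. u \<in> A} \<le> p" if "u \<in> set vs" for u
      using prob_pd_phase1_mem_le[OF assms(5,6,1), of E f \<beta> u] by (simp add: N_def vimage_def)
  qed (use assms(5) in auto)
  then show ?thesis by (simp add: N_def)
qed

lemma OPT_attained:
  obtains T where "T \<subseteq> set vs" "independent E T" "OPT vs E f = f T"
proof -
  let ?ind = "{T. T \<subseteq> set vs \<and> independent E T}"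
  have "finite ?ind"
    by (rule finite_subset[of _ "Pow (set vs)"]) auto
  moreover have "{} \<in> ?ind"
    by (simp add: independent_def)
  ultimately have "Max (f ` ?ind) \<in> f ` ?ind"
    by (intro Max_in) auto
  moreover have "OPT vs E f = Max (f ` ?ind)"
    unfolding OPT_def by (simp add: setcompr_eq_image)
  ultimately show ?thesis using that by auto
qed

theorem lemma10:
  fixes k :: nat and vs :: "'a list" and E :: "'a \<Rightarrow> 'a \<Rightarrow> bool"
    and f :: "'a set \<Rightarrow> real" and \<beta> p :: real
  assumes "k \<ge> 1"
    and "simple_graph vs E"
    and "k_independence_ordering k vs E"
    and "\<forall>T. T \<subseteq> set vs \<longrightarrow> f T \<ge> 0"
    and "submodular_on (set vs) f"
    and "f {} = 0"
    and "\<beta> > 0" and "0 < p" and "p < 1"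
  shows "OPT vs E f \<le>
    (real k * max ((1 - p) / p) (1 + \<beta>) + (1 + \<beta>) / \<beta>) / (1 - p)
      * measure_pmf.expectation (pd_rand vs E f \<beta> p) f"
proof -
  obtain T where T: "T \<subseteq> set vs" "independent E T" "OPT vs E f = f T"
    by (rule OPT_attained)
  have "distinct vs" using assms(2) by (simp add: simple_graph_def)
  have "(1 - p) * OPT vs E f
      \<le> measure_pmf.expectation (pd_phase1 vs E f \<beta> p) (\<lambda>st. f (T \<union> set (fst st)))"
    using expectation_f_union_ge[OF \<open>distinct vs\<close> assms(5,4) T(1)] assms(8,9) T(3) by simp
  also have "\<dots> \<le> (real k * max ((1 - p) / p) (1 + \<beta>) + (1 + \<beta>) / \<beta>)
      * measure_pmf.expectation (pd_rand vs E f \<beta> p) f"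
    by (rule expectation_f_union_le[OF assms(2,3,1,5-9) T(2,1)])
  finally show ?thesis
    using assms(9) by (simp add: field_simps)
qed

end
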